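(* Assume $\Lambda$ is $b$-dependent for some $b>0$ and $\mathbb{E}[e^{\alpha\Lambda(Q_1)}]<\infty$ for all $\alpha>0$. Let $s>0$ and $A\subset\mathbb{R}^d$ compact with $|\partial A|=0$. Then $\Lambda(r\partial A\oplus Q_s)$ is exponentially equivalent to zero as $r\to\infty$, i.e. for every $\delta>0$, $$\lim_{r\to\infty}r^{-d}\log\mathbb{P}\big(\Lambda(r\partial A\oplus Q_s)>\delta r^d\big)=-\infty.$$
   Context: $\Lambda$ is a stationary random locally finite Borel measure on $\mathbb{R}^d$. $Q_s=[-s/2,s/2]^d$. $\Lambda$ is $b$-dependent if its restrictions to sets at distance $>b$ are independent. For $A,B\subset\mathbb{R}^d$, $A\oplus B=\bigcup_{a\in A}(a+B)$; $\partial A$ is the topological boundary; $|\cdot|$ is Lebesgue measure. *)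

theory Defs
  imports "HOL-Probability.Probability"
begin

definition cube :: "real \<Rightarrow> 'a::euclidean_space set" where
  "cube s = cbox (- ((s/2) *\<^sub>R One)) ((s/2) *\<^sub>R One)"

definition msum :: "'a::real_vector set \<Rightarrow> 'a set \<Rightarrow> 'a set" where
  "msum A B = {a + c | a c. a \<in> A \<and> c \<in> B}"

definition random_lf_measure :: "'w measure \<Rightarrow> ('w \<Rightarrow> 'a::euclidean_space measure) \<Rightarrow> bool" where
  "random_lf_measure M L \<longleftrightarrow> prob_space M \<and>
     (\<forall>\<omega>\<in>space M. sets (L \<omega>) = sets borel \<and>
        (\<forall>B\<in>sets borel. bounded B \<longrightarrow> emeasure (L \<omega>) B < \<infinity>)) \<and>
     (\<forall>B\<in>sets borel. (\<lambda>\<omega>. emeasure (L \<omega>) B) \<in> borel_measurable M)"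

text \<open>Stationarity: for every shift x, all finite-dimensional distributions of the
  shifted measure B \<mapsto> L(B + x) coincide with those of L (equivalently, the laws
  of the shifted and unshifted random measures coincide).\<close>
definition stationary_rm :: "'w measure \<Rightarrow> ('w \<Rightarrow> 'a::euclidean_space measure) \<Rightarrow> bool" where
  "stationary_rm M L \<longleftrightarrow>
     (\<forall>x::'a. \<forall>n::nat. \<forall>B::nat \<Rightarrow> 'a set. (\<forall>i<n. B i \<in> sets borel) \<longrightarrow>
        distr M (PiM {..<n} (\<lambda>_. borel)) (\<lambda>\<omega>. \<lambda>i\<in>{..<n}. emeasure (L \<omega>) ((\<lambda>y. y + x) ` B i))
      = distr M (PiM {..<n} (\<lambda>_. borel)) (\<lambda>\<omega>. \<lambda>i\<in>{..<n}. emeasure (L \<omega>) (B i)))"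

definition restr_sigma :: "'w measure \<Rightarrow> ('w \<Rightarrow> 'a::euclidean_space measure) \<Rightarrow> 'a set \<Rightarrow> 'w set set" where
  "restr_sigma M L S = sigma_sets (space M)
     {{\<omega>\<in>space M. emeasure (L \<omega>) (C \<inter> S) \<in> T} | C T. C \<in> sets borel \<and> T \<in> sets (borel :: ennreal measure)}"

definition b_dependent :: "'w measure \<Rightarrow> ('w \<Rightarrow> 'a::euclidean_space measure) \<Rightarrow> real \<Rightarrow> bool" where
  "b_dependent M L b \<longleftrightarrow>
     (\<forall>S1\<in>sets borel. \<forall>S2\<in>sets borel. setdist S1 S2 > b \<longrightarrow>
        prob_space.indep_set M (restr_sigma M L S1) (restr_sigma M L S2))"

definition ln_ext :: "real \<Rightarrow> ereal" where
  "ln_ext x = (if x = 0 then -\<infinity> else ereal (ln x))"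

end

theory Submission
  imports Defs
begin

text \<open>Cover space by unit lattice cells and colour a cell by the residues of its corner modulo
  \<open>m = \<lceil>b\<rceil> + 2\<close>.  Distinct cells of one colour are more than \<open>b\<close> apart, so \<open>b\<close>-dependence and
  stationarity bound the exponential moment of \<open>\<Lambda>\<close> on a union of \<open>N\<close> cells of one colour by
  \<open>C\<^sub>\<alpha> ^ N\<close>, where \<open>C\<^sub>\<alpha> = E exp (\<alpha> \<Lambda>(Q\<^sub>1))\<close>.  A Chernoff bound and a union bound over the
  \<open>m ^ d\<close> colours give \<open>P(\<Lambda>(r\<partial>A \<oplus> Q\<^sub>s) > \<delta> r ^ d) \<le> m ^ d exp (- \<alpha> \<delta> r ^ d / m ^ d) C\<^sub>\<alpha> ^ N\<close>
  with \<open>N\<close> the number of cells meeting \<open>r\<partial>A \<oplus> Q\<^sub>s\<close>.  These cells lie in the \<open>r\<close>-dilate of a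
  \<open>(c/r)\<close>-thickening of \<open>\<partial>A\<close>, whose volume tends to \<open>|\<partial>A| = 0\<close>; so \<open>N = o(r ^ d)\<close>, and since
  \<open>\<alpha>\<close> is arbitrary the decay rate is arbitrarily large.\<close>

definition int_lattice :: "'a::euclidean_space set" where
  "int_lattice = {z. \<forall>i\<in>Basis. z \<bullet> i \<in> \<int>}"

definition lattice_floor :: "'a::euclidean_space \<Rightarrow> 'a" where
  "lattice_floor x = (\<Sum>i\<in>Basis. of_int \<lfloor>x \<bullet> i\<rfloor> *\<^sub>R i)"

definition unit_cell :: "'a::euclidean_space \<Rightarrow> 'a set" where
  "unit_cell z = cbox z (z + One)"

lemma inner_lattice_floor: "i \<in> Basis \<Longrightarrow> lattice_floor x \<bullet> i = of_int \<lfloor>x \<bullet> i\<rfloor>"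
  unfolding lattice_floor_def by (simp add: inner_sum_left_Basis)

lemma lattice_floor_in_int_lattice: "lattice_floor x \<in> int_lattice"
  unfolding int_lattice_def by (simp add: inner_lattice_floor)

lemma mem_unit_cell_lattice_floor: "x \<in> unit_cell (lattice_floor x)"
  unfolding unit_cell_def mem_box by (simp add: inner_lattice_floor inner_add_left)

lemma int_lattice_inner_eq_floor: "z \<in> int_lattice \<Longrightarrow> i \<in> Basis \<Longrightarrow> z \<bullet> i = of_int \<lfloor>z \<bullet> i\<rfloor>"
  unfolding int_lattice_def by (auto elim!: Ints_cases)

lemma unit_cell_translate: "unit_cell z = (\<lambda>y. y + (z + (1/2) *\<^sub>R One)) ` cube 1"
proof -
  have "unit_cell z = cbox ((z + (1/2) *\<^sub>R One) + - ((1/2) *\<^sub>R One)) ((z + (1/2) *\<^sub>R One) + (1/2) *\<^sub>R One)"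
    unfolding unit_cell_def by (simp add: algebra_simps flip: scaleR_add_left)
  also have "\<dots> = (\<lambda>x. (z + (1/2) *\<^sub>R One) + x) ` cube 1"
    unfolding cube_def by (rule cbox_translation)
  finally show ?thesis by (simp add: add.commute)
qed

lemma disjoint_lattice_boxes:
  assumes "z \<in> int_lattice" "z' \<in> int_lattice" "z \<noteq> z'"
  shows "box z (z + One) \<inter> box z' (z' + One) = {}"
proof (rule ccontr)
  assume "box z (z + One) \<inter> box z' (z' + One) \<noteq> {}"
  then obtain x where x: "x \<in> box z (z + One)" "x \<in> box z' (z' + One)" by blast
  obtain i where i: "i \<in> Basis" "z \<bullet> i \<noteq> z' \<bullet> i" using assms(3) euclidean_eqI by blast
  define k k' where "k = \<lfloor>z \<bullet> i\<rfloor>" and "k' = \<lfloor>z' \<bullet> i\<rfloor>"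
  have k: "z \<bullet> i = of_int k" "z' \<bullet> i = of_int k'"
    unfolding k_def k'_def using assms(1,2) i(1) by (auto intro: int_lattice_inner_eq_floor)
  have "of_int k < x \<bullet> i" "x \<bullet> i < of_int k + 1" "of_int k' < x \<bullet> i" "x \<bullet> i < of_int k' + 1"
    using x i(1) k unfolding mem_box by (auto simp: inner_add_left)
  then have "k = k'" by linarith
  then show False using i k by simp
qed

lemma card_le_measure_if_lattice_boxes_subset:
  assumes G: "G \<subseteq> int_lattice" and sub: "\<And>z. z \<in> G \<Longrightarrow> box z (z + One) \<subseteq> T"
    and T: "T \<in> sets borel" "emeasure lborel T < \<infinity>"
  shows "finite G \<and> real (card G) \<le> measure lborel T"
proof -
  have card_le: "real (card H) \<le> measure lborel T" if H: "finite H" "H \<subseteq> G" for H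
  proof -
    have "of_nat (card H) = (\<Sum>z\<in>H. emeasure lborel (box z (z + One)))"
      by (simp add: emeasure_lborel_box_eq inner_add_left)
    also have "\<dots> = emeasure lborel (\<Union>z\<in>H. box z (z + One))"
    proof (rule sum_emeasure)
      show "disjoint_family_on (\<lambda>z. box z (z + One)) H"
        unfolding disjoint_family_on_def using H G by (metis disjoint_lattice_boxes subsetD)
    qed (use H in auto)
    also have "\<dots> \<le> emeasure lborel T"
      using sub H T by (intro emeasure_mono) auto
    also have "\<dots> = ennreal (measure lborel T)"
      using T by (simp add: emeasure_eq_ennreal_measure less_top)
    finally show ?thesis
      by (metis ennreal_of_nat_eq_real_of_nat ennreal_le_iff measure_nonneg)
  qed
  have "card H \<le> nat \<lceil>measure lborel T\<rceil>" if "H \<subseteq> G" "finite H" for H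
    using card_le[OF that(2,1)] by linarith
  then have "finite G" using finite_if_finite_subsets_card_bdd by blast
  with card_le show ?thesis by blast
qed

definition thickening :: "'a::real_normed_vector set \<Rightarrow> real \<Rightarrow> 'a set" where
  "thickening F e = msum F (cball 0 e)"

lemma compact_thickening:
  fixes F :: "'a::euclidean_space set"
  shows "compact F \<Longrightarrow> compact (thickening F e)"
  unfolding thickening_def msum_def by (intro compact_sums compact_cball)

lemma mem_thickening: "x \<in> thickening F e \<longleftrightarrow> (\<exists>a\<in>F. dist a x \<le> e)"
proof
  assume "x \<in> thickening F e"
  then obtain a c where "a \<in> F" "norm c \<le> e" "x = a + c"
    unfolding thickening_def msum_def by auto
  then show "\<exists>a\<in>F. dist a x \<le> e" by (intro bexI[of _ a]) (auto simp: dist_norm)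
next
  assume "\<exists>a\<in>F. dist a x \<le> e"
  then obtain a where "a \<in> F" "dist a x \<le> e" by blast
  then show "x \<in> thickening F e"
    unfolding thickening_def msum_def
    by (intro CollectI exI[of _ a] exI[of _ "x - a"]) (simp add: dist_norm norm_minus_commute)
qed

lemma thickening_mono:
  assumes "e \<le> e'"
  shows "thickening F e \<subseteq> thickening F e'"
proof
  fix x assume "x \<in> thickening F e"
  then obtain a where "a \<in> F" "dist a x \<le> e" by (auto simp: mem_thickening)
  with assms show "x \<in> thickening F e'" unfolding mem_thickening by (intro bexI[of _ a]) auto
qed

lemma Inter_thickening:
  fixes F :: "'a::real_normed_vector set"
  assumes "closed F"
  shows "(\<Inter>n. thickening F (1 / Suc n)) = F"
proof
  show "F \<subseteq> (\<Inter>n. thickening F (1 / Suc n))"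
  proof (intro subsetI INT_I)
    fix x n assume "x \<in> F"
    then show "x \<in> thickening F (1 / Suc n)" unfolding mem_thickening by (intro bexI[of _ x]) auto
  qed
  show "(\<Inter>n. thickening F (1 / Suc n)) \<subseteq> F"
  proof
    fix x assume "x \<in> (\<Inter>n. thickening F (1 / Suc n))"
    then have "\<forall>n. \<exists>a\<in>F. dist a x \<le> 1 / Suc n"
      by (simp add: mem_thickening)
    then obtain a where "\<forall>n. a n \<in> F \<and> dist (a n) x \<le> 1 / Suc n"
      by (auto simp: Bex_def dest!: choice)
    then have a: "\<And>n. a n \<in> F" "\<And>n. dist (a n) x \<le> 1 / Suc n" by auto
    have "\<forall>\<^sub>F n in sequentially. norm (dist (a n) x) \<le> 1 / Suc n"
      using a(2) by (intro always_eventually) simp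
    then have "(\<lambda>n. dist (a n) x) \<longlonglongrightarrow> 0"
      by (rule Lim_null_comparison) (rule LIMSEQ_inverse_real_of_nat[unfolded inverse_eq_divide])
    then have "a \<longlonglongrightarrow> x" by (rule tendsto_dist_iff[THEN iffD2])
    then show "x \<in> F" by (rule closed_sequentially[OF assms a(1)])
  qed
qed

lemma tendsto_measure_thickening:
  fixes F :: "'a::euclidean_space set"
  assumes F: "compact F" and null: "emeasure lborel F = 0"
  shows "((\<lambda>e. measure lborel (thickening F e)) \<longlongrightarrow> 0) (at_right 0)"
proof (rule order_tendstoI)
  show "\<forall>\<^sub>F e in at_right 0. a < measure lborel (thickening F e)" if "a < 0" for a
    by (intro always_eventually allI) (meson measure_nonneg order_less_le_trans that)
next
  fix \<eta> :: real assume "0 < \<eta>"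
  define T where "T n = thickening F (1 / Suc n)" for n
  have T: "T n \<in> fmeasurable lborel" for n
    unfolding T_def by (intro fmeasurable_compact compact_thickening F)
  have "(\<lambda>n. measure lborel (T n)) \<longlonglongrightarrow> measure lborel (\<Inter>n. T n)"
  proof (rule Lim_measure_decseq)
    show "decseq T" unfolding T_def decseq_def by (auto intro!: thickening_mono simp: frac_le)
    show "range T \<subseteq> sets lborel" using T by (auto simp: fmeasurable_def)
    show "emeasure lborel (T n) \<noteq> \<infinity>" for n using T by (simp add: emeasure_eq_measure2)
  qed
  moreover have "measure lborel (\<Inter>n. T n) = 0"
    unfolding T_def Inter_thickening[OF compact_imp_closed[OF F]] using null by (simp add: measure_def)
  ultimately have "(\<lambda>n. measure lborel (T n)) \<longlonglongrightarrow> 0" by simp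
  from order_tendstoD(2)[OF this \<open>0 < \<eta>\<close>]
  obtain n where n: "measure lborel (T n) < \<eta>" by (auto simp: eventually_sequentially)
  have "\<forall>\<^sub>F e in at_right 0. e \<in> {0<..<1 / Suc n}"
    by (rule eventually_at_right_real) simp
  then show "\<forall>\<^sub>F e in at_right 0. measure lborel (thickening F e) < \<eta>"
  proof eventually_elim
    case (elim e)
    have "thickening F e \<subseteq> T n"
      unfolding T_def using elim by (intro thickening_mono) simp
    moreover have "thickening F e \<in> sets lborel"
      using F by (simp add: borel_compact compact_thickening)
    ultimately have "measure lborel (thickening F e) \<le> measure lborel (T n)"
      using T by (rule measure_mono_fmeasurable)
    with n show ?case by linarith
  qed
qed

lemma norm_le_of_mem_cube:
  fixes q :: "'a::euclidean_space"
  assumes "q \<in> cube s"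
  shows "norm q \<le> DIM('a) * (s / 2)"
proof -
  have "\<bar>q \<bullet> i\<bar> \<le> s / 2" if "i \<in> Basis" for i
    using assms that unfolding cube_def mem_box by (auto simp: abs_le_iff)
  then have "(\<Sum>i\<in>Basis. \<bar>q \<bullet> i\<bar>) \<le> (\<Sum>i\<in>(Basis::'a set). s / 2)"
    by (intro sum_mono) auto
  then show ?thesis using norm_le_l1[of q] by simp
qed

lemma norm_diff_le_of_mem_unit_cell_lattice_floor:
  fixes x :: "'a::euclidean_space"
  assumes "y \<in> unit_cell (lattice_floor x)"
  shows "norm (y - x) \<le> DIM('a)"
proof -
  have "\<bar>(y - x) \<bullet> i\<bar> \<le> 1" if i: "i \<in> Basis" for i
  proof -
    have "of_int \<lfloor>x \<bullet> i\<rfloor> \<le> y \<bullet> i" "y \<bullet> i \<le> of_int \<lfloor>x \<bullet> i\<rfloor> + 1"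
      using assms i unfolding unit_cell_def mem_box by (auto simp: inner_lattice_floor inner_add_left)
    moreover have "of_int \<lfloor>x \<bullet> i\<rfloor> \<le> x \<bullet> i" "x \<bullet> i < of_int \<lfloor>x \<bullet> i\<rfloor> + 1" by linarith+
    ultimately show ?thesis unfolding inner_diff_left abs_le_iff by linarith
  qed
  then have "(\<Sum>i\<in>Basis. \<bar>(y - x) \<bullet> i\<bar>) \<le> (\<Sum>i\<in>(Basis::'a set). 1)"
    by (intro sum_mono) auto
  then show ?thesis using norm_le_l1[of "y - x"] by simp
qed

lemma card_lattice_floor_dilation_le:
  fixes F :: "'a::euclidean_space set" and s :: real
  assumes F: "compact F" and r: "r > 0"
  defines "S \<equiv> msum ((\<lambda>x. r *\<^sub>R x) ` F) (cube s)"
  shows "finite (lattice_floor ` S) \<and>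
    real (card (lattice_floor ` S)) \<le> r ^ DIM('a) * measure lborel (thickening F (DIM('a) * (1 + s/2) / r))"
proof -
  define e where "e = DIM('a) * (1 + s/2) / r"
  define T where "T = (\<lambda>v. r *\<^sub>R v) ` thickening F e"
  have T: "compact T" unfolding T_def by (intro compact_scaling compact_thickening F)
  have cell_sub: "unit_cell (lattice_floor x) \<subseteq> T" if "x \<in> S" for x
  proof
    fix y assume y: "y \<in> unit_cell (lattice_floor x)"
    obtain a q where a: "a \<in> F" and q: "q \<in> cube s" and x: "x = r *\<^sub>R a + q"
      using \<open>x \<in> S\<close> unfolding S_def msum_def by auto
    define c where "c = (1/r) *\<^sub>R (y - r *\<^sub>R a)"
    have "norm (y - r *\<^sub>R a) \<le> norm (y - x) + norm q"
      using norm_triangle_ineq[of "y - x" q] unfolding x by (simp add: algebra_simps)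
    also have "\<dots> \<le> DIM('a) * (1 + s/2)"
      using norm_diff_le_of_mem_unit_cell_lattice_floor[OF y] norm_le_of_mem_cube[OF q]
      by (simp add: algebra_simps)
    finally have "norm (y - r *\<^sub>R a) / r \<le> e" unfolding e_def using r by (simp add: divide_right_mono)
    moreover have "norm c = norm (y - r *\<^sub>R a) / r" unfolding c_def using r by simp
    ultimately have "norm c \<le> e" by simp
    then have "a + c \<in> thickening F e" unfolding thickening_def msum_def using a by auto
    moreover have "y = r *\<^sub>R (a + c)" unfolding c_def using r by (simp add: algebra_simps)
    ultimately show "y \<in> T" unfolding T_def by blast
  qed
  have "finite (lattice_floor ` S) \<and> real (card (lattice_floor ` S)) \<le> measure lborel T"
  proof (rule card_le_measure_if_lattice_boxes_subset)
    show "box z (z + One) \<subseteq> T" if "z \<in> lattice_floor ` S" for z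
      using that cell_sub box_subset_cbox unfolding unit_cell_def by blast
    show "lattice_floor ` S \<subseteq> int_lattice" using lattice_floor_in_int_lattice by blast
    show "T \<in> sets borel" using T by (rule borel_compact)
    show "emeasure lborel T < \<infinity>"
      using emeasure_bounded_finite[OF compact_imp_bounded[OF T]] by (simp add: less_top)
  qed
  moreover have "measure lborel T = r ^ DIM('a) * measure lborel (thickening F e)"
  proof -
    have "measure lebesgue ((\<lambda>v. r *\<^sub>R v + 0) ` thickening F e)
        = \<bar>r\<bar> ^ DIM('a) * measure lebesgue (thickening F e)"
      by (rule measure_lebesgue_affine)
    then show ?thesis
      using T compact_thickening[OF F] r unfolding T_def by (simp add: borel_compact)
  qed
  ultimately show ?thesis unfolding e_def by simp
qed

lemma eventually_card_lattice_floor_dilation_le: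
  fixes F :: "'a::euclidean_space set"
  assumes s: "s \<ge> 0" and F: "compact F" "emeasure lborel F = 0" and \<eta>: "\<eta> > 0"
  shows "\<forall>\<^sub>F r in at_top. real (card (lattice_floor ` msum ((\<lambda>x. r *\<^sub>R x) ` F) (cube s))) \<le> \<eta> * r ^ DIM('a)"
proof -
  define c where "c = DIM('a) * (1 + s/2)"
  have "filterlim (\<lambda>r. c / r) (at_right 0) at_top"
  proof (rule tendsto_imp_filterlim_at_right)
    show "((\<lambda>r. c / r) \<longlongrightarrow> 0) at_top"
      by (intro tendsto_divide_0[OF tendsto_const] filterlim_at_top_imp_at_infinity filterlim_ident)
    show "\<forall>\<^sub>F r in at_top. 0 < c / r"
      using eventually_gt_at_top[of 0] by eventually_elim (simp add: c_def s add_pos_nonneg)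
  qed
  from filterlim_compose[OF tendsto_measure_thickening[OF F] this]
  have "\<forall>\<^sub>F r in at_top. measure lborel (thickening F (c / r)) < \<eta>"
    using \<eta> by (auto dest: order_tendstoD(2))
  with eventually_gt_at_top[of 0] show ?thesis
  proof eventually_elim
    case (elim r)
    then have "r ^ DIM('a) * measure lborel (thickening F (c / r)) \<le> \<eta> * r ^ DIM('a)"
      by (simp add: mult.commute)
    then show ?case using card_lattice_floor_dilation_le[OF F(1) \<open>r > 0\<close>, of s] by (simp add: c_def)
  qed
qed

definition separated :: "real \<Rightarrow> 'a::euclidean_space set \<Rightarrow> bool" where
  "separated m F \<longleftrightarrow> (\<forall>z\<in>F. \<forall>z'\<in>F. z \<noteq> z' \<longrightarrow> (\<exists>i\<in>Basis. m \<le> \<bar>z \<bullet> i - z' \<bullet> i\<bar>))"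

definition residue_class :: "nat \<Rightarrow> ('a \<Rightarrow> int) \<Rightarrow> 'a::euclidean_space set \<Rightarrow> 'a set" where
  "residue_class m \<rho> G = {z\<in>G. \<forall>i\<in>Basis. \<lfloor>z \<bullet> i\<rfloor> mod int m = \<rho> i}"

lemma separated_residue_class:
  assumes "G \<subseteq> int_lattice"
  shows "separated (real m) (residue_class m \<rho> G)"
  unfolding separated_def
proof (intro ballI impI)
  fix z z' assume z: "z \<in> residue_class m \<rho> G" and z': "z' \<in> residue_class m \<rho> G" and "z \<noteq> z'"
  obtain i where i: "i \<in> Basis" "z \<bullet> i \<noteq> z' \<bullet> i" using \<open>z \<noteq> z'\<close> euclidean_eqI by blast
  define a a' where "a = \<lfloor>z \<bullet> i\<rfloor>" and "a' = \<lfloor>z' \<bullet> i\<rfloor>"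
  have za: "z \<bullet> i = of_int a" "z' \<bullet> i = of_int a'"
    unfolding a_def a'_def using z z' assms i(1)
    by (auto simp: residue_class_def intro: int_lattice_inner_eq_floor)
  have "a mod int m = a' mod int m" using z z' i(1) unfolding residue_class_def a_def a'_def by auto
  then have "int m dvd a - a'" by (simp add: mod_eq_dvd_iff)
  moreover have "a - a' \<noteq> 0" using i(2) za by auto
  ultimately have "\<bar>int m\<bar> \<le> \<bar>a - a'\<bar>" by (rule dvd_imp_le_int[rotated])
  then show "\<exists>i\<in>Basis. real m \<le> \<bar>z \<bullet> i - z' \<bullet> i\<bar>" using i(1) za by (intro bexI[of _ i]) linarith+
qed

lemma setdist_unit_cells_ge:
  assumes sep: "separated m (insert z F)" and "z \<notin> F" "F \<noteq> {}"
  shows "m - 1 \<le> setdist (\<Union>z'\<in>F. unit_cell z') (unit_cell z)"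
proof (rule le_setdistI)
  show "(\<Union>z'\<in>F. unit_cell z') \<noteq> {}" "unit_cell z \<noteq> {}"
    using \<open>F \<noteq> {}\<close> mem_unit_cell_lattice_floor unfolding unit_cell_def
    by (auto simp: box_ne_empty inner_add_left)
  fix x y assume "x \<in> (\<Union>z'\<in>F. unit_cell z')" and y: "y \<in> unit_cell z"
  then obtain z' where z': "z' \<in> F" "x \<in> unit_cell z'" by blast
  then obtain i where i: "i \<in> Basis" "m \<le> \<bar>z' \<bullet> i - z \<bullet> i\<bar>"
    using sep \<open>z \<notin> F\<close> unfolding separated_def by (metis insertCI)
  have "z' \<bullet> i \<le> x \<bullet> i" "x \<bullet> i \<le> z' \<bullet> i + 1" "z \<bullet> i \<le> y \<bullet> i" "y \<bullet> i \<le> z \<bullet> i + 1"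
    using z'(2) y i(1) unfolding unit_cell_def mem_box by (auto simp: inner_add_left)
  then have "m - 1 \<le> \<bar>(x - y) \<bullet> i\<bar>" using i(2) unfolding inner_diff_left by linarith
  also have "\<dots> \<le> dist x y" using i(1) by (simp add: dist_norm Basis_le_norm)
  finally show "m - 1 \<le> dist x y" .
qed

definition mass :: "('w \<Rightarrow> 'a::euclidean_space measure) \<Rightarrow> 'a set \<Rightarrow> 'w \<Rightarrow> real" where
  "mass L B \<omega> = enn2real (emeasure (L \<omega>) B)"

definition mass_mgf :: "'w measure \<Rightarrow> ('w \<Rightarrow> 'a::euclidean_space measure) \<Rightarrow> real \<Rightarrow> 'a set \<Rightarrow> ennreal" where
  "mass_mgf M L \<alpha> B = (\<integral>\<^sup>+\<omega>. ennreal (exp (\<alpha> * mass L B \<omega>)) \<partial>M)"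

lemma emeasure_eq_mass:
  assumes "random_lf_measure M L" "\<omega> \<in> space M" "B \<in> sets borel" "bounded B"
  shows "emeasure (L \<omega>) B = ennreal (mass L B \<omega>)"
  using assms unfolding random_lf_measure_def mass_def by (simp add: ennreal_enn2real_if less_top)

lemma borel_measurable_mass[measurable]:
  assumes "random_lf_measure M L" "B \<in> sets borel"
  shows "mass L B \<in> borel_measurable M"
proof -
  have "(\<lambda>\<omega>. emeasure (L \<omega>) B) \<in> borel_measurable M"
    using assms unfolding random_lf_measure_def by blast
  then show ?thesis unfolding mass_def by measurable
qed

lemma mass_nonneg [simp]: "0 \<le> mass L B \<omega>"
  by (simp add: mass_def)

lemma mass_Un_le:
  assumes rl: "random_lf_measure M L" and \<omega>: "\<omega> \<in> space M"
    and "A \<in> sets borel" "B \<in> sets borel" "bounded A" "bounded B"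
  shows "mass L (A \<union> B) \<omega> \<le> mass L A \<omega> + mass L B \<omega>"
proof -
  have "sets (L \<omega>) = sets borel" using rl \<omega> unfolding random_lf_measure_def by blast
  then have "emeasure (L \<omega>) (A \<union> B) \<le> emeasure (L \<omega>) A + emeasure (L \<omega>) B"
    using assms by (intro emeasure_subadditive) auto
  then have "ennreal (mass L (A \<union> B) \<omega>) \<le> ennreal (mass L A \<omega> + mass L B \<omega>)"
    using assms by (simp add: emeasure_eq_mass)
  then show ?thesis by (metis ennreal_le_iff add_nonneg_nonneg mass_nonneg)
qed

lemma mass_mgf_ge_1:
  assumes "random_lf_measure M L" "\<alpha> \<ge> 0"
  shows "1 \<le> mass_mgf M L \<alpha> B"
proof -
  interpret prob_space M using assms(1) unfolding random_lf_measure_def by blast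
  have "(\<integral>\<^sup>+\<omega>. 1 \<partial>M) \<le> mass_mgf M L \<alpha> B"
    unfolding mass_mgf_def using assms(2) by (intro nn_integral_mono) (simp add: mass_def)
  then show ?thesis by (simp add: emeasure_space_1)
qed

lemma mass_mgf_translate:
  assumes rl: "random_lf_measure M L" and st: "stationary_rm M L"
    and B: "B \<in> sets borel" and Bx: "(\<lambda>y. y + x) ` B \<in> sets borel"
  shows "mass_mgf M L \<alpha> ((\<lambda>y. y + x) ` B) = mass_mgf M L \<alpha> B"
proof -
  define N where "N = (PiM {..<1::nat} (\<lambda>_. borel) :: (nat \<Rightarrow> ennreal) measure)"
  define f where "f h = ennreal (exp (\<alpha> * enn2real (h (0::nat))))" for h :: "nat \<Rightarrow> ennreal"
  define T where "T C \<omega> = (\<lambda>i\<in>{..<1::nat}. emeasure (L \<omega>) C)" for C \<omega>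
  have "distr M N (T ((\<lambda>y. y + x) ` B)) = distr M N (T B)"
    using st[unfolded stationary_rm_def, rule_format, of 1 "\<lambda>_. B" x] B
    unfolding N_def T_def by simp
  moreover have T: "T C \<in> measurable M N" if "C \<in> sets borel" for C
    using rl that unfolding T_def N_def random_lf_measure_def by (intro measurable_restrict) auto
  moreover have f: "f \<in> borel_measurable N" unfolding f_def N_def by measurable
  moreover have "mass_mgf M L \<alpha> C = (\<integral>\<^sup>+h. f h \<partial>distr M N (T C))" if "C \<in> sets borel" for C
  proof -
    have "mass_mgf M L \<alpha> C = (\<integral>\<^sup>+\<omega>. f (T C \<omega>) \<partial>M)"
      by (simp add: mass_mgf_def mass_def f_def T_def)
    also have "\<dots> = (\<integral>\<^sup>+h. f h \<partial>distr M N (T C))"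
      using T[OF that] f by (simp add: nn_integral_distr)
    finally show ?thesis .
  qed
  ultimately show ?thesis using B Bx by simp
qed

lemma sigma_sets_vimage_subset_restr_sigma:
  fixes g :: "ennreal \<Rightarrow> 'b::topological_space"
  assumes g: "g \<in> borel_measurable (borel :: ennreal measure)"
  shows "sigma_sets (space M) {(\<lambda>\<omega>. g (emeasure (L \<omega>) S)) -` A \<inter> space M | A. A \<in> sets borel}
    \<subseteq> restr_sigma M L S"
  unfolding restr_sigma_def
proof (rule sigma_sets_subseteq, safe)
  fix A :: "'b set" assume "A \<in> sets borel"
  then have "g -` A \<in> sets (borel :: ennreal measure)" using measurable_sets[OF g] by simp
  then show "\<exists>C T. (\<lambda>\<omega>. g (emeasure (L \<omega>) S)) -` A \<inter> space M
      = {\<omega>\<in>space M. emeasure (L \<omega>) (C \<inter> S) \<in> T} \<and> C \<in> sets borel \<and> T \<in> sets borel"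
    by (intro exI[of _ UNIV] exI[of _ "g -` A"]) auto
qed

lemma nn_integral_exp_mass_indep:
  assumes rl: "random_lf_measure M L" and bd: "b_dependent M L b"
    and S: "S1 \<in> sets borel" "S2 \<in> sets borel" "b < setdist S1 S2"
  shows "(\<integral>\<^sup>+\<omega>. ennreal (exp (\<alpha> * mass L S1 \<omega>)) * ennreal (exp (\<alpha> * mass L S2 \<omega>)) \<partial>M)
       = mass_mgf M L \<alpha> S1 * mass_mgf M L \<alpha> S2"
proof -
  interpret prob_space M using rl unfolding random_lf_measure_def by blast
  define g where "g v = ennreal (exp (\<alpha> * enn2real v))" for v :: ennreal
  define X where "X S \<omega> = g (emeasure (L \<omega>) S)" for S \<omega>
  have g: "g \<in> borel_measurable borel" unfolding g_def by measurable
  have X: "random_variable borel (X S)" if "S \<in> sets borel" for S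
    using borel_measurable_mass[OF rl that] unfolding X_def g_def mass_def[symmetric] by measurable
  have borel: "(\<lambda>_. borel) = case_bool borel borel" by (intro ext) (simp split: bool.split)
  have ind: "indep_set (restr_sigma M L S1) (restr_sigma M L S2)"
    using bd S unfolding b_dependent_def by blast
  have "indep_var borel (X S1) borel (X S2)"
    unfolding indep_var_eq
  proof (intro conjI)
    show "random_variable borel (X S1)" "random_variable borel (X S2)" using X S by auto
    show "indep_set (sigma_sets (space M) {X S1 -` A \<inter> space M |A. A \<in> sets borel})
        (sigma_sets (space M) {X S2 -` A \<inter> space M |A. A \<in> sets borel})"
      using ind sigma_sets_vimage_subset_restr_sigma[OF g, of M L S1]
        sigma_sets_vimage_subset_restr_sigma[OF g, of M L S2]
      unfolding indep_sets2_eq X_def by blast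
  qed
  then have "indep_vars (\<lambda>_. borel) (case_bool (X S1) (X S2)) UNIV"
    unfolding indep_var_def borel .
  then have "(\<integral>\<^sup>+\<omega>. (\<Prod>i\<in>UNIV. case_bool (X S1) (X S2) i \<omega>) \<partial>M)
      = (\<Prod>i\<in>UNIV. \<integral>\<^sup>+\<omega>. case_bool (X S1) (X S2) i \<omega> \<partial>M)"
    by (intro indep_vars_nn_integral) auto
  then show ?thesis
    unfolding mass_mgf_def X_def g_def mass_def by (simp add: UNIV_bool mult.commute)
qed

lemma mass_mgf_Un_le:
  assumes rl: "random_lf_measure M L" and bd: "b_dependent M L b" and \<alpha>: "\<alpha> \<ge> 0"
    and S: "S1 \<in> sets borel" "S2 \<in> sets borel" "bounded S1" "bounded S2" "b < setdist S1 S2"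
  shows "mass_mgf M L \<alpha> (S1 \<union> S2) \<le> mass_mgf M L \<alpha> S1 * mass_mgf M L \<alpha> S2"
proof -
  have "mass_mgf M L \<alpha> (S1 \<union> S2)
      \<le> (\<integral>\<^sup>+\<omega>. ennreal (exp (\<alpha> * mass L S1 \<omega>)) * ennreal (exp (\<alpha> * mass L S2 \<omega>)) \<partial>M)"
    unfolding mass_mgf_def
  proof (rule nn_integral_mono)
    fix \<omega> assume "\<omega> \<in> space M"
    then have "\<alpha> * mass L (S1 \<union> S2) \<omega> \<le> \<alpha> * mass L S1 \<omega> + \<alpha> * mass L S2 \<omega>"
      using mass_Un_le[OF rl _ S(1-4)] \<alpha> by (simp add: mult_left_mono flip: distrib_left)
    then show "ennreal (exp (\<alpha> * mass L (S1 \<union> S2) \<omega>))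
        \<le> ennreal (exp (\<alpha> * mass L S1 \<omega>)) * ennreal (exp (\<alpha> * mass L S2 \<omega>))"
      by (simp add: ennreal_leI flip: ennreal_mult exp_add)
  qed
  also have "\<dots> = mass_mgf M L \<alpha> S1 * mass_mgf M L \<alpha> S2"
    by (rule nn_integral_exp_mass_indep[OF rl bd S(1,2,5)])
  finally show ?thesis .
qed

lemma mass_mgf_separated_cells_le:
  assumes rl: "random_lf_measure M L" and st: "stationary_rm M L" and bd: "b_dependent M L b"
    and \<alpha>: "\<alpha> \<ge> 0" and m: "b + 2 \<le> m" and F: "finite F" "separated m F"
  shows "mass_mgf M L \<alpha> (\<Union>z\<in>F. unit_cell z) \<le> mass_mgf M L \<alpha> (cube 1) ^ card F"
  using F
proof (induction F rule: finite_induct)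
  case empty
  interpret prob_space M using rl unfolding random_lf_measure_def by blast
  show ?case by (simp add: mass_mgf_def mass_def emeasure_space_1)
next
  case (insert z F)
  have cell: "mass_mgf M L \<alpha> (unit_cell w) = mass_mgf M L \<alpha> (cube 1)" for w
    using mass_mgf_translate[OF rl st, of "cube 1" "w + (1/2) *\<^sub>R One"]
    unfolding unit_cell_translate[symmetric] by (simp add: cube_def unit_cell_def)
  have IH: "mass_mgf M L \<alpha> (\<Union>z\<in>F. unit_cell z) \<le> mass_mgf M L \<alpha> (cube 1) ^ card F"
    using insert.IH insert.prems unfolding separated_def by blast
  show ?case
  proof (cases "F = {}")
    case True
    then show ?thesis by (simp add: cell)
  next
    case False
    have "b < setdist (\<Union>z'\<in>F. unit_cell z') (unit_cell z)"
      using setdist_unit_cells_ge[OF insert.prems insert.hyps(2) False] m by linarith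
    then have "mass_mgf M L \<alpha> ((\<Union>z'\<in>F. unit_cell z') \<union> unit_cell z)
        \<le> mass_mgf M L \<alpha> (\<Union>z'\<in>F. unit_cell z') * mass_mgf M L \<alpha> (unit_cell z)"
      using insert.hyps(1)
      by (intro mass_mgf_Un_le[OF rl bd \<alpha>]) (auto simp: unit_cell_def intro!: sets.finite_UN)
    also have "\<dots> \<le> mass_mgf M L \<alpha> (cube 1) ^ card F * mass_mgf M L \<alpha> (cube 1)"
      using IH by (simp add: cell mult_right_mono)
    finally show ?thesis using insert.hyps by (simp add: Un_commute mult.commute)
  qed
qed

lemma emeasure_mass_gt_le_mgf:
  assumes rl: "random_lf_measure M L" and U: "U \<in> sets borel" and \<alpha>: "\<alpha> > 0"
  shows "emeasure M {\<omega>\<in>space M. u < mass L U \<omega>} \<le> ennreal (exp (- \<alpha> * u)) * mass_mgf M L \<alpha> U"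
proof -
  note borel_measurable_mass[OF rl U, measurable]
  have "emeasure M {\<omega>\<in>space M. u < mass L U \<omega>} \<le> emeasure M {\<omega>\<in>space M. u \<le> mass L U \<omega>}"
    by (intro emeasure_mono) auto
  also have "\<dots> \<le> ennreal (exp (- \<alpha> * u)) *
      (\<integral>\<^sup>+\<omega>. ennreal (exp (\<alpha> * mass L U \<omega>)) * indicator (space M) \<omega> \<partial>M)"
    by (intro Chernoff_ineq_nn_integral_ge \<alpha>) auto
  also have "(\<integral>\<^sup>+\<omega>. ennreal (exp (\<alpha> * mass L U \<omega>)) * indicator (space M) \<omega> \<partial>M) = mass_mgf M L \<alpha> U"
    unfolding mass_mgf_def by (intro nn_integral_cong) simp
  finally show ?thesis .
qed

lemma ex_mass_gt_of_cover:
  assumes rl: "random_lf_measure M L" and \<omega>: "\<omega> \<in> space M" and R: "finite R" "R \<noteq> {}"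
    and U: "\<And>\<rho>. \<rho> \<in> R \<Longrightarrow> U \<rho> \<in> sets borel" "\<And>\<rho>. \<rho> \<in> R \<Longrightarrow> bounded (U \<rho>)"
    and S: "S \<in> sets borel" "S \<subseteq> (\<Union>\<rho>\<in>R. U \<rho>)"
    and t: "ennreal t < emeasure (L \<omega>) S"
  shows "\<exists>\<rho>\<in>R. t / card R < mass L (U \<rho>) \<omega>"
proof (rule ccontr)
  assume "\<not> ?thesis"
  then have "mass L (U \<rho>) \<omega> \<le> t / card R" if "\<rho> \<in> R" for \<rho>
    using that by auto
  then have "(\<Sum>\<rho>\<in>R. mass L (U \<rho>) \<omega>) \<le> card R * (t / card R)"
    by (rule sum_bounded_above)
  also have "\<dots> = t" using R by simp
  finally have sum_le: "(\<Sum>\<rho>\<in>R. mass L (U \<rho>) \<omega>) \<le> t" .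
  have "sets (L \<omega>) = sets borel" using rl \<omega> unfolding random_lf_measure_def by blast
  then have "emeasure (L \<omega>) S \<le> emeasure (L \<omega>) (\<Union>\<rho>\<in>R. U \<rho>)"
    using S R U by (intro emeasure_mono) auto
  also have "\<dots> \<le> (\<Sum>\<rho>\<in>R. emeasure (L \<omega>) (U \<rho>))"
    using \<open>sets (L \<omega>) = sets borel\<close> R U by (intro emeasure_subadditive_finite) auto
  also have "\<dots> = (\<Sum>\<rho>\<in>R. ennreal (mass L (U \<rho>) \<omega>))"
    using U by (intro sum.cong) (simp_all add: emeasure_eq_mass[OF rl \<omega>])
  also have "\<dots> = ennreal (\<Sum>\<rho>\<in>R. mass L (U \<rho>) \<omega>)" by (simp add: sum_ennreal)
  also have "\<dots> \<le> ennreal t" using sum_le by (rule ennreal_leI)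
  finally show False using t by simp
qed

lemma subset_Union_residue_class_cells:
  assumes "m > 0"
  shows "S \<subseteq> (\<Union>\<rho>\<in>Basis \<rightarrow>\<^sub>E {0..<int m}. \<Union>z\<in>residue_class m \<rho> (lattice_floor ` S). unit_cell z)"
proof
  fix x assume "x \<in> S"
  define \<rho> where "\<rho> = restrict (\<lambda>i. \<lfloor>lattice_floor x \<bullet> i\<rfloor> mod int m) Basis"
  have "\<rho> \<in> Basis \<rightarrow>\<^sub>E {0..<int m}" unfolding \<rho>_def using assms by auto
  moreover have "lattice_floor x \<in> residue_class m \<rho> (lattice_floor ` S)"
    unfolding residue_class_def \<rho>_def using \<open>x \<in> S\<close> by auto
  ultimately show "x \<in> (\<Union>\<rho>\<in>Basis \<rightarrow>\<^sub>E {0..<int m}. \<Union>z\<in>residue_class m \<rho> (lattice_floor ` S). unit_cell z)"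
    using mem_unit_cell_lattice_floor by blast
qed

lemma prob_mass_residue_class_cells_gt_le:
  assumes rl: "random_lf_measure M L" and st: "stationary_rm M L" and bd: "b_dependent M L b"
    and \<alpha>: "\<alpha> > 0" and fin: "mass_mgf M L \<alpha> (cube 1) < \<infinity>"
    and m: "b + 2 \<le> real m" and G: "finite G" "G \<subseteq> int_lattice"
  shows "measure M {\<omega>\<in>space M. u < mass L (\<Union>z\<in>residue_class m \<rho> G. unit_cell z) \<omega>}
    \<le> exp (- \<alpha> * u) * enn2real (mass_mgf M L \<alpha> (cube 1)) ^ card G"
proof -
  define c where "c = enn2real (mass_mgf M L \<alpha> (cube 1))"
  define U where "U = (\<Union>z\<in>residue_class m \<rho> G. unit_cell z)"
  have mgf: "mass_mgf M L \<alpha> (cube 1) = ennreal c" "1 \<le> c"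
    using fin enn2real_mono[OF mass_mgf_ge_1[OF rl less_imp_le[OF \<alpha>]] fin[unfolded infinity_ennreal_def]]
    unfolding c_def by (auto simp: ennreal_enn2real_if less_top)
  have "U \<in> sets borel"
    unfolding U_def residue_class_def unit_cell_def using G(1) by (auto intro!: sets.finite_UN)
  then have "emeasure M {\<omega>\<in>space M. u < mass L U \<omega>} \<le> ennreal (exp (- \<alpha> * u)) * mass_mgf M L \<alpha> U"
    by (rule emeasure_mass_gt_le_mgf[OF rl _ \<alpha>])
  also have "\<dots> \<le> ennreal (exp (- \<alpha> * u)) * ennreal c ^ card (residue_class m \<rho> G)"
    unfolding U_def mgf(1)[symmetric] using \<alpha> G m
    by (intro mult_left_mono mass_mgf_separated_cells_le[OF rl st bd _ _ _ separated_residue_class])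
      (auto simp: residue_class_def)
  also have "\<dots> \<le> ennreal (exp (- \<alpha> * u) * c ^ card G)"
    using mgf(2) G(1)
    by (auto simp: ennreal_power ennreal_mult' residue_class_def
        intro!: mult_left_mono power_increasing card_mono)
  finally show ?thesis
    unfolding measure_def U_def c_def using mgf(2) by (intro enn2real_leI) (auto simp: c_def)
qed

lemma prob_mass_dilation_gt_le:
  fixes F :: "'a::euclidean_space set" and L :: "'w \<Rightarrow> 'a measure" and s t :: real
  assumes rl: "random_lf_measure M L" and st: "stationary_rm M L" and bd: "b_dependent M L b"
    and \<alpha>: "\<alpha> > 0" and F: "compact F" and r: "r > 0"
    and fin: "mass_mgf M L \<alpha> (cube 1) < \<infinity>"
  defines "S \<equiv> msum ((\<lambda>x. r *\<^sub>R x) ` F) (cube s)"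
    and "K \<equiv> (nat \<lceil>b\<rceil> + 2) ^ DIM('a)"
  shows "measure M {\<omega>\<in>space M. ennreal t < emeasure (L \<omega>) S}
    \<le> K * exp (- \<alpha> * (t / K)) * enn2real (mass_mgf M L \<alpha> (cube 1)) ^ card (lattice_floor ` S)"
proof -
  interpret prob_space M using rl unfolding random_lf_measure_def by blast
  define m where "m = nat \<lceil>b\<rceil> + 2"
  define G where "G = lattice_floor ` S"
  define R where "R = (Basis :: 'a set) \<rightarrow>\<^sub>E {0..<int m}"
  define U where "U \<rho> = (\<Union>z\<in>residue_class m \<rho> G. unit_cell z)" for \<rho>
  define Ev where "Ev \<rho> = {\<omega>\<in>space M. t / K < mass L (U \<rho>) \<omega>}" for \<rho>
  have S: "S \<in> sets borel" unfolding S_def msum_def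
    by (intro borel_compact compact_sums compact_scaling F) (simp add: cube_def)
  have G: "finite G" "G \<subseteq> int_lattice"
    unfolding G_def S_def using card_lattice_floor_dilation_le[OF F r] lattice_floor_in_int_lattice by auto
  have "m > 0" unfolding m_def by simp
  have "card R = m ^ DIM('a)" unfolding R_def by (simp add: card_PiE)
  then have R: "finite R" "card R = K" "R \<noteq> {}"
    unfolding K_def m_def by (auto simp: R_def intro!: finite_PiE)
  have U: "U \<rho> \<in> sets borel" "bounded (U \<rho>)" for \<rho>
    unfolding U_def residue_class_def unit_cell_def using G(1) by (auto intro!: sets.finite_UN)
  have Ev: "Ev \<rho> \<in> sets M" for \<rho>
    unfolding Ev_def using borel_measurable_mass[OF rl U(1)] by measurable
  have "S \<subseteq> (\<Union>\<rho>\<in>R. U \<rho>)"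
    unfolding R_def U_def G_def by (rule subset_Union_residue_class_cells[OF \<open>m > 0\<close>])
  then have "{\<omega>\<in>space M. ennreal t < emeasure (L \<omega>) S} \<subseteq> (\<Union>\<rho>\<in>R. Ev \<rho>)"
    using ex_mass_gt_of_cover[OF rl _ R(1,3) U S] R(2) unfolding Ev_def by fastforce
  then have "measure M {\<omega>\<in>space M. ennreal t < emeasure (L \<omega>) S} \<le> (\<Sum>\<rho>\<in>R. measure M (Ev \<rho>))"
    using R(1) Ev by (intro order_trans[OF finite_measure_mono finite_measure_subadditive_finite]) auto
  also have "\<dots> \<le> (\<Sum>\<rho>\<in>R. exp (- \<alpha> * (t / K)) * enn2real (mass_mgf M L \<alpha> (cube 1)) ^ card G)"
    unfolding Ev_def U_def using real_nat_ceiling_ge[of b] G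
    by (intro sum_mono prob_mass_residue_class_cells_gt_le[OF rl st bd \<alpha> fin]) (auto simp: m_def)
  also have "\<dots> = K * exp (- \<alpha> * (t / K)) * enn2real (mass_mgf M L \<alpha> (cube 1)) ^ card G"
    using R(2) by simp
  finally show ?thesis unfolding G_def .
qed

lemma eventually_prob_mass_dilation_gt_le_exp:
  fixes F :: "'a::euclidean_space set" and L :: "'w \<Rightarrow> 'a measure"
  assumes rl: "random_lf_measure M L" and st: "stationary_rm M L" and bd: "b_dependent M L b"
    and mgf: "\<And>\<alpha>. \<alpha> > 0 \<Longrightarrow> mass_mgf M L \<alpha> (cube 1) < \<infinity>"
    and s: "s \<ge> 0" and F: "compact F" "emeasure lborel F = 0" and \<delta>: "\<delta> > 0" and B: "B \<ge> 0"
  shows "\<forall>\<^sub>F r in at_top. measure M {\<omega>\<in>space M.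
    ennreal (\<delta> * r ^ DIM('a)) < emeasure (L \<omega>) (msum ((\<lambda>x. r *\<^sub>R x) ` F) (cube s))}
    \<le> exp (- B * r ^ DIM('a))"
proof -
  define K where "K = (nat \<lceil>b\<rceil> + 2) ^ DIM('a)"
  \<comment> \<open>With this \<open>\<alpha>\<close> the Chernoff factor is \<open>exp (- (B + 2) r ^ d)\<close>; one \<open>r ^ d\<close> absorbs the
    \<open>K\<close> colours, the other absorbs \<open>c ^ N\<close>, which the choice of \<open>\<eta>\<close> keeps below \<open>exp (r ^ d)\<close>.\<close>
  define \<alpha> where "\<alpha> = K * (B + 2) / \<delta>"
  define c where "c = enn2real (mass_mgf M L \<alpha> (cube 1))"
  define \<eta> where "\<eta> = 1 / (ln c + 1)"
  have K: "real K \<ge> 1" unfolding K_def by simp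
  have \<alpha>: "\<alpha> > 0" unfolding \<alpha>_def using K \<delta> B by simp
  have c: "c \<ge> 1"
    using enn2real_mono[OF mass_mgf_ge_1[OF rl less_imp_le[OF \<alpha>]] mgf[OF \<alpha>, unfolded infinity_ennreal_def]]
    unfolding c_def by simp
  have \<eta>: "\<eta> > 0" "\<eta> * ln c \<le> 1"
    unfolding \<eta>_def using ln_ge_zero[OF c] by (simp_all add: field_simps del: ln_ge_zero_iff)
  have "filterlim (\<lambda>r::real. r ^ DIM('a)) at_top at_top"
    by (intro filterlim_pow_at_top filterlim_ident) simp
  then have "\<forall>\<^sub>F r in at_top. ln K \<le> r ^ DIM('a)"
    by (simp add: filterlim_at_top)
  with eventually_card_lattice_floor_dilation_le[OF s F \<eta>(1)] eventually_gt_at_top[of 0]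
  show ?thesis
  proof eventually_elim
    case (elim r)
    define N where "N = card (lattice_floor ` msum ((\<lambda>x. r *\<^sub>R x) ` F) (cube s))"
    have "N * ln c \<le> r ^ DIM('a)"
    proof -
      have "N * ln c \<le> \<eta> * r ^ DIM('a) * ln c"
        using elim c unfolding N_def by (intro mult_right_mono) auto
      also have "\<dots> \<le> r ^ DIM('a)"
        using \<eta>(2) elim by (simp add: mult.commute mult.left_commute mult_left_le)
      finally show ?thesis .
    qed
    have "measure M {\<omega>\<in>space M. ennreal (\<delta> * r ^ DIM('a)) < emeasure (L \<omega>) (msum ((\<lambda>x. r *\<^sub>R x) ` F) (cube s))}
        \<le> K * exp (- \<alpha> * (\<delta> * r ^ DIM('a) / K)) * c ^ N"
      unfolding N_def c_def K_def using prob_mass_dilation_gt_le[OF rl st bd \<alpha> F(1) \<open>r > 0\<close> mgf[OF \<alpha>]] by simp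
    also have "\<dots> = exp (ln K) * exp (- ((B + 2) * r ^ DIM('a))) * exp (N * ln c)"
    proof -
      have "\<alpha> * (\<delta> * r ^ DIM('a) / K) = (B + 2) * r ^ DIM('a)"
        unfolding \<alpha>_def using K \<delta> by (simp add: field_simps)
      then show ?thesis using K c by (simp add: exp_of_nat_mult)
    qed
    also have "\<dots> = exp (ln K + - ((B + 2) * r ^ DIM('a)) + N * ln c)"
      by (simp only: exp_add)
    also have "\<dots> \<le> exp (- B * r ^ DIM('a))"
      using elim \<open>N * ln c \<le> r ^ DIM('a)\<close> by (simp add: algebra_simps)
    finally show ?case .
  qed
qed

lemma tendsto_scaled_ln_ext_MInfty:
  fixes p g :: "real \<Rightarrow> real"
  assumes g: "\<forall>\<^sub>F r in at_top. g r > 0" and p: "\<And>r. p r \<ge> 0"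
    and decay: "\<And>B. B \<ge> 0 \<Longrightarrow> \<forall>\<^sub>F r in at_top. p r \<le> exp (- B * g r)"
  shows "((\<lambda>r. ereal (1 / g r) * ln_ext (p r)) \<longlongrightarrow> -\<infinity>) at_top"
  unfolding tendsto_MInfty
proof
  fix B :: real
  have "\<forall>\<^sub>F r in at_top. p r \<le> exp (- (\<bar>B\<bar> + 1) * g r)" by (rule decay) simp
  with g show "\<forall>\<^sub>F r in at_top. ereal (1 / g r) * ln_ext (p r) < ereal B"
  proof eventually_elim
    case (elim r)
    show ?case
    proof (cases "p r = 0")
      case True
      then show ?thesis using elim by (simp add: ln_ext_def)
    next
      case False
      then have "ln (p r) \<le> ln (exp (- (\<bar>B\<bar> + 1) * g r))"
        using p[of r] elim by (subst ln_le_cancel_iff) auto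
      then have "ln (p r) / g r \<le> - (\<bar>B\<bar> + 1)"
        using elim by (simp add: pos_divide_le_eq)
      then show ?thesis using False by (simp add: ln_ext_def)
    qed
  qed
qed

theorem mainTheorem13:
  fixes M :: "'w measure" and L :: "'w \<Rightarrow> 'a::euclidean_space measure"
    and b s \<delta> :: real and A :: "'a set"
  assumes "random_lf_measure M L"
    and "stationary_rm M L"
    and "b > 0" and "b_dependent M L b"
    and "\<forall>\<alpha>>0. (\<integral>\<^sup>+ \<omega>. ennreal (exp (\<alpha> * enn2real (emeasure (L \<omega>) (cube 1)))) \<partial>M) < \<infinity>"
    and "s > 0"
    and "compact A" and "emeasure lborel (frontier A) = 0"
    and "\<delta> > 0"
  shows "((\<lambda>r. ereal (1 / r ^ DIM('a)) *
            ln_ext (measure M {\<omega>\<in>space M.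
              emeasure (L \<omega>) (msum ((\<lambda>x. r *\<^sub>R x) ` frontier A) (cube s)) > ennreal (\<delta> * r ^ DIM('a))}))
          \<longlongrightarrow> -\<infinity>) at_top"
proof (rule tendsto_scaled_ln_ext_MInfty)
  show "\<forall>\<^sub>F r in at_top. 0 < (r::real) ^ DIM('a)"
    using eventually_gt_at_top[of 0] by (rule eventually_mono) simp
  show "\<forall>\<^sub>F r in at_top. measure M {\<omega>\<in>space M.
      emeasure (L \<omega>) (msum ((\<lambda>x. r *\<^sub>R x) ` frontier A) (cube s)) > ennreal (\<delta> * r ^ DIM('a))}
    \<le> exp (- B * r ^ DIM('a))" if "B \<ge> 0" for B
    using assms(5,6)
    by (intro eventually_prob_mass_dilation_gt_le_exp[OF assms(1,2,4) _ _ compact_frontier[OF assms(7)] assms(8,9) that])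
      (auto simp: mass_mgf_def mass_def)
qed simp

end
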